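(* Let $G$ be an amenable (discrete) group, let $(X,u)$ and $(Y,v)$ be $G$-spaces with $X$ $G$-complemented in its bidual, and let $\Omega:Y\curvearrowright X$ be a quasi-linear map between them. Assume that for every $g\in G$ there is a linear map $L_g:Y_{00}\to X_\infty$ such that $T_g=\begin{pmatrix}u(g)&L_g\\0&v(g)\end{pmatrix}$, i.e. $T_g(x,y)=(u(g)x+L_gy,v(g)y)$, is a bounded invertible operator on $X\oplus_\Omega Y$, with $\sup_{g\in G}\|T_g\|\|T_g^{-1}\|<\infty$. Then the action of $G$ is compatible with $\Omega$, and the associated derivation $g\mapsto d(g)$ can be chosen so that $d(g)-L_g$ maps $Y_{00}$ into $X$ with $\sup_{g}\sup_{y\in Y_{00},\|y\|\le1}\|d(g)y-L_gy\|_X<\infty$.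
   Context: $G$-space: Banach space with bounded action $g\mapsto u(g)$. A quasi-linear map $\Omega:Y\curvearrowright X$ between $G$-spaces $(Y,v),(X,u)$ is a homogeneous map $\Omega:Y_{00}\to X_\infty$, with $Y_{00}\subseteq Y$ dense and $v(G)$-invariant, $X_\infty\supseteq X$ a vector space to which $u$ extends linearly, and $\|\Omega(y+y')-\Omega y-\Omega y'\|_X\le C(\|y\|+\|y'\|)$. $X\oplus_\Omega Y$ is the completion of $\{(x,y)\in X_\infty\times Y_{00}:x-\Omega y\in X\}$ under $\|x-\Omega y\|_X+\|y\|_Y$. A derivation is a map $g\mapsto d(g)$, $d(g):Y_{00}\to X_\infty$ linear, with $d(gh)=u(g)d(h)+d(g)v(h)$. The action is compatible with $\Omega$ if there is a derivation $d$ and $C$ with $\|u(g)\Omega y-\Omega v(g)y+d(g)y\|_X\le C\|y\|_Y$ for all $g,y$; equivalently $g\mapsto\begin{pmatrix}u(g)&d(g)\\0&v(g)\end{pmatrix}$ is a bounded representation on $X\oplus_\Omega Y$. $X$ is $G$-complemented in its bidual if there is a bounded projection $P:X^{**}\to X$ with $Pu(g)^{**}=u(g)P$. *)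

theory Defs
  imports "HOL-Analysis.Analysis" "HOL-Algebra.Group"
begin

definition amenable :: "('g, 'b) monoid_scheme \<Rightarrow> bool" where
  "amenable G \<longleftrightarrow> (\<exists>m :: ('g \<Rightarrow> real) \<Rightarrow> real.
     (\<forall>f f'. (\<forall>x\<in>carrier G. f x = f' x) \<longrightarrow> m f = m f') \<and>
     (\<forall>f f'. bounded (f ` carrier G) \<and> bounded (f' ` carrier G) \<longrightarrow>
        m (\<lambda>x. f x + f' x) = m f + m f') \<and>
     (\<forall>c f. bounded (f ` carrier G) \<longrightarrow> m (\<lambda>x. c * f x) = c * m f) \<and>
     (\<forall>f. bounded (f ` carrier G) \<and> (\<forall>x\<in>carrier G. 0 \<le> f x) \<longrightarrow> 0 \<le> m f) \<and>
     m (\<lambda>x. 1) = 1 \<and>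
     (\<forall>f g. bounded (f ` carrier G) \<and> g \<in> carrier G \<longrightarrow>
        m (\<lambda>x. f (g \<otimes>\<^bsub>G\<^esub> x)) = m f))"

definition G_space :: "('g, 'b) monoid_scheme \<Rightarrow> ('g \<Rightarrow> ('x::banach \<Rightarrow>\<^sub>L 'x)) \<Rightarrow> bool" where
  "G_space G u \<longleftrightarrow> group G \<and>
     (\<forall>g\<in>carrier G. \<forall>h\<in>carrier G. u (g \<otimes>\<^bsub>G\<^esub> h) = u g o\<^sub>L u h) \<and>
     u \<one>\<^bsub>G\<^esub> = id_blinfun \<and>
     (\<exists>C. \<forall>g\<in>carrier G. norm (u g) \<le> C)"

definition adj :: "('a::real_normed_vector \<Rightarrow>\<^sub>L 'c::real_normed_vector) \<Rightarrow>
    (('c \<Rightarrow>\<^sub>L real) \<Rightarrow>\<^sub>L ('a \<Rightarrow>\<^sub>L real))" where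
  "adj T = Blinfun (\<lambda>f. f o\<^sub>L T)"

definition bidual_emb :: "'a::real_normed_vector \<Rightarrow> (('a \<Rightarrow>\<^sub>L real) \<Rightarrow>\<^sub>L real)" where
  "bidual_emb x = Blinfun (\<lambda>f. blinfun_apply f x)"

definition G_complemented_in_bidual ::
    "('g, 'b) monoid_scheme \<Rightarrow> ('g \<Rightarrow> ('x::banach \<Rightarrow>\<^sub>L 'x)) \<Rightarrow> bool" where
  "G_complemented_in_bidual G u \<longleftrightarrow>
     (\<exists>P :: ((('x \<Rightarrow>\<^sub>L real) \<Rightarrow>\<^sub>L real) \<Rightarrow>\<^sub>L 'x).
        (\<forall>x. blinfun_apply P (bidual_emb x) = x) \<and>
        (\<forall>g\<in>carrier G. P o\<^sub>L adj (adj (u g)) = u g o\<^sub>L P))"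

text \<open>X is embedded into the ambient vector space X_infinity (a type 'z) by an injective linear
map \<iota>; "z \<in> X" means z \<in> range \<iota>, and the X-norm of such z is the norm of its preimage.\<close>

definition nX :: "('x::real_normed_vector \<Rightarrow> 'z) \<Rightarrow> 'z \<Rightarrow> real" where
  "nX \<iota> z = norm (inv_into UNIV \<iota> z)"

definition extends_action ::
    "('g, 'b) monoid_scheme \<Rightarrow> ('x::real_normed_vector \<Rightarrow> 'z::real_vector)
      \<Rightarrow> ('g \<Rightarrow> ('x \<Rightarrow>\<^sub>L 'x)) \<Rightarrow> ('g \<Rightarrow> 'z \<Rightarrow> 'z) \<Rightarrow> bool" where
  "extends_action G \<iota> u uinf \<longleftrightarrow>
     (\<forall>g\<in>carrier G. linear (uinf g)) \<and>
     (\<forall>g\<in>carrier G. \<forall>x. uinf g (\<iota> x) = \<iota> (u g x)) \<and>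
     (\<forall>g\<in>carrier G. \<forall>h\<in>carrier G. uinf (g \<otimes>\<^bsub>G\<^esub> h) = uinf g \<circ> uinf h) \<and>
     uinf \<one>\<^bsub>G\<^esub> = id"

definition quasi_linear ::
    "('x::real_normed_vector \<Rightarrow> 'z::real_vector) \<Rightarrow> 'y::real_normed_vector set \<Rightarrow> ('y \<Rightarrow> 'z) \<Rightarrow> bool" where
  "quasi_linear \<iota> Y00 \<Omega> \<longleftrightarrow>
     (\<forall>y\<in>Y00. \<forall>c. \<Omega> (c *\<^sub>R y) = c *\<^sub>R \<Omega> y) \<and>
     (\<exists>C. \<forall>y\<in>Y00. \<forall>y'\<in>Y00.
        \<Omega> (y + y') - \<Omega> y - \<Omega> y' \<in> range \<iota> \<and>
        nX \<iota> (\<Omega> (y + y') - \<Omega> y - \<Omega> y') \<le> C * (norm y + norm y'))"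

definition linear_on :: "'y::real_vector set \<Rightarrow> ('y \<Rightarrow> 'z::real_vector) \<Rightarrow> bool" where
  "linear_on Y00 f \<longleftrightarrow> (\<forall>y\<in>Y00. \<forall>y'\<in>Y00. \<forall>a b. f (a *\<^sub>R y + b *\<^sub>R y') = a *\<^sub>R f y + b *\<^sub>R f y')"

definition tw_dom :: "('x \<Rightarrow> 'z::real_vector) \<Rightarrow> ('y \<Rightarrow> 'z) \<Rightarrow> 'y set \<Rightarrow> ('z \<times> 'y) set" where
  "tw_dom \<iota> \<Omega> Y00 = {(x, y). y \<in> Y00 \<and> x - \<Omega> y \<in> range \<iota>}"

definition tw_qnorm :: "('x::real_normed_vector \<Rightarrow> 'z::real_vector) \<Rightarrow> ('y::real_normed_vector \<Rightarrow> 'z)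
    \<Rightarrow> 'z \<times> 'y \<Rightarrow> real" where
  "tw_qnorm \<iota> \<Omega> p = nX \<iota> (fst p - \<Omega> (snd p)) + norm (snd p)"

definition tw_op :: "('z \<Rightarrow> 'z::real_vector) \<Rightarrow> ('y \<Rightarrow> 'y) \<Rightarrow> ('y \<Rightarrow> 'z) \<Rightarrow> 'z \<times> 'y \<Rightarrow> 'z \<times> 'y" where
  "tw_op ug vg Lg p = (ug (fst p) + Lg (snd p), vg (snd p))"

text \<open>T is (the restriction to the dense domain D of) a bounded invertible operator on the
completion X (+)_Omega Y with norm T \<le> a and norm of T inverse \<le> b: T maps D into D, is bounded by a,
bounded below by 1/b, and has dense range.\<close>

definition tw_iso_bounds ::
    "('x::real_normed_vector \<Rightarrow> 'z::real_vector) \<Rightarrow> ('y::real_normed_vector \<Rightarrow> 'z) \<Rightarrow> 'y set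
      \<Rightarrow> ('z \<times> 'y \<Rightarrow> 'z \<times> 'y) \<Rightarrow> real \<Rightarrow> real \<Rightarrow> bool" where
  "tw_iso_bounds \<iota> \<Omega> Y00 T a b \<longleftrightarrow>
     (let D = tw_dom \<iota> \<Omega> Y00; \<rho> = tw_qnorm \<iota> \<Omega> in
       0 \<le> a \<and> 0 \<le> b \<and>
       (\<forall>p\<in>D. T p \<in> D) \<and>
       (\<forall>p\<in>D. \<rho> (T p) \<le> a * \<rho> p) \<and>
       (\<forall>p\<in>D. \<rho> p \<le> b * \<rho> (T p)) \<and>
       (\<forall>p\<in>D. \<forall>e>0. \<exists>q\<in>D. \<rho> (T q - p) < e))"

definition derivation ::
    "('g, 'b) monoid_scheme \<Rightarrow> 'y set \<Rightarrow> ('g \<Rightarrow> 'z \<Rightarrow> 'z::real_vector) \<Rightarrow> ('g \<Rightarrow> ('y::real_normed_vector \<Rightarrow>\<^sub>L 'y))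
      \<Rightarrow> ('g \<Rightarrow> 'y \<Rightarrow> 'z) \<Rightarrow> bool" where
  "derivation G Y00 uinf v d \<longleftrightarrow>
     (\<forall>g\<in>carrier G. linear_on Y00 (d g)) \<and>
     (\<forall>g\<in>carrier G. \<forall>h\<in>carrier G. \<forall>y\<in>Y00.
        d (g \<otimes>\<^bsub>G\<^esub> h) y = uinf g (d h y) + d g (v h y))"

definition compatible_via ::
    "('g, 'b) monoid_scheme \<Rightarrow> ('x::real_normed_vector \<Rightarrow> 'z::real_vector) \<Rightarrow> 'y set
      \<Rightarrow> ('g \<Rightarrow> 'z \<Rightarrow> 'z) \<Rightarrow> ('g \<Rightarrow> ('y::real_normed_vector \<Rightarrow>\<^sub>L 'y)) \<Rightarrow> ('y \<Rightarrow> 'z)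
      \<Rightarrow> ('g \<Rightarrow> 'y \<Rightarrow> 'z) \<Rightarrow> bool" where
  "compatible_via G \<iota> Y00 uinf v \<Omega> d \<longleftrightarrow>
     derivation G Y00 uinf v d \<and>
     (\<exists>C. \<forall>g\<in>carrier G. \<forall>y\<in>Y00.
        uinf g (\<Omega> y) - \<Omega> (v g y) + d g y \<in> range \<iota> \<and>
        nX \<iota> (uinf g (\<Omega> y) - \<Omega> (v g y) + d g y) \<le> C * norm y)"

end

theory Submission
  imports Defs
begin

text \<open>
Write \<open>M g y = u(g) \<Omega> y - \<Omega> (v(g) y) + L g y\<close>. Since \<open>T g\<close> maps \<open>(\<Omega> y, y)\<close> into the twisted
sum, \<open>M g y\<close> lies in \<open>X\<close> with \<open>\<parallel>M g y\<parallel> \<le> \<parallel>T g\<parallel> \<parallel>y\<parallel>\<close>, and testing the lower bound of \<open>T g\<close> on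
\<open>(x, 0)\<close> gives \<open>1 \<le> \<parallel>T g\<inverse>\<parallel> \<parallel>u g\<parallel>\<close>; so the defects \<open>M g\<close> are uniformly bounded.

An invariant mean averages bounded \<open>X\<close>-valued families weak* in \<open>X**\<close>, and the equivariant projection
brings the average back into \<open>X\<close>, commuting with every \<open>u g\<close>. With
\<open>\<Phi> y = avg\<^sub>k M k (v(k\<inverse>) y)\<close> the map \<open>\<Omega>' = \<Omega> + \<Phi>\<close> is, formally, the average of the conjugates
\<open>u(k) \<Omega> v(k\<inverse>) + L k v(k\<inverse>)\<close> of \<open>\<Omega>\<close> by the \<open>T k\<close>. Its coboundary
\<open>d g = \<Omega>' v(g) - u(g) \<Omega>'\<close> satisfies the derivation identity, and it is compatible with \<open>\<Omega>\<close>
because \<open>\<Omega>' - \<Omega> = \<Phi>\<close> is bounded. Only the linearity of \<open>d g\<close> needs the mean once more: by left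
invariance \<open>d g - L g = avg\<^sub>k e g k v(k\<inverse>)\<close>, where \<open>e g k = M (g k) - u(g) M k - M g v(k)\<close> is linear
because the \<open>\<Omega>\<close>-terms cancel in it.
\<close>

lemma adj_apply: "adj T f = f o\<^sub>L T"
  unfolding adj_def
  by (subst bounded_linear_Blinfun_apply)
     (auto intro: bounded_bilinear.bounded_linear_left[OF bounded_bilinear_blinfun_compose])

lemma bidual_emb_apply: "bidual_emb x f = f x"
  unfolding bidual_emb_def
  by (subst bounded_linear_Blinfun_apply)
     (auto intro: bounded_bilinear.bounded_linear_left[OF bounded_bilinear_blinfun_apply])

lemma nX_apply: "inj \<iota> \<Longrightarrow> nX \<iota> (\<iota> x) = norm x"
  by (simp add: nX_def)

lemma quasi_linear_zero: "quasi_linear \<iota> Y00 \<Omega> \<Longrightarrow> 0 \<in> Y00 \<Longrightarrow> \<Omega> 0 = 0"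
  unfolding quasi_linear_def by (metis scale_zero_left)

lemma linear_onD:
  "linear_on Y00 f \<Longrightarrow> y \<in> Y00 \<Longrightarrow> y' \<in> Y00 \<Longrightarrow> f (a *\<^sub>R y + b *\<^sub>R y') = a *\<^sub>R f y + b *\<^sub>R f y'"
  unfolding linear_on_def by blast

lemma linear_on_zero: "linear_on Y00 f \<Longrightarrow> 0 \<in> Y00 \<Longrightarrow> f 0 = 0"
  using linear_onD[of Y00 f 0 0 0 0] by simp

section \<open>Averaging over an amenable group\<close>

locale invariant_mean =
  fixes G :: "('g, 'b) monoid_scheme" and m :: "('g \<Rightarrow> real) \<Rightarrow> real"
  assumes mean_cong: "(\<And>x. x \<in> carrier G \<Longrightarrow> f x = f' x) \<Longrightarrow> m f = m f'"
    and mean_add: "bounded (f ` carrier G) \<Longrightarrow> bounded (f' ` carrier G) \<Longrightarrow>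
      m (\<lambda>x. f x + f' x) = m f + m f'"
    and mean_scale: "bounded (f ` carrier G) \<Longrightarrow> m (\<lambda>x. c * f x) = c * m f"
    and mean_nonneg: "bounded (f ` carrier G) \<Longrightarrow> (\<And>x. x \<in> carrier G \<Longrightarrow> 0 \<le> f x) \<Longrightarrow> 0 \<le> m f"
    and mean_one: "m (\<lambda>x. 1) = 1"
    and mean_left_translate: "bounded (f ` carrier G) \<Longrightarrow> g \<in> carrier G \<Longrightarrow>
      m (\<lambda>x. f (g \<otimes>\<^bsub>G\<^esub> x)) = m f"

lemma amenable_imp_invariant_mean:
  fixes G :: "('g, 'b) monoid_scheme"
  assumes "amenable G"
  obtains m where "invariant_mean G m"
proof -
  from assms obtain m :: "('g \<Rightarrow> real) \<Rightarrow> real" where m: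
    "\<forall>f f'. (\<forall>x\<in>carrier G. f x = f' x) \<longrightarrow> m f = m f'"
    "\<forall>f f'. bounded (f ` carrier G) \<and> bounded (f' ` carrier G) \<longrightarrow>
       m (\<lambda>x. f x + f' x) = m f + m f'"
    "\<forall>c f. bounded (f ` carrier G) \<longrightarrow> m (\<lambda>x. c * f x) = c * m f"
    "\<forall>f. bounded (f ` carrier G) \<and> (\<forall>x\<in>carrier G. 0 \<le> f x) \<longrightarrow> 0 \<le> m f"
    "m (\<lambda>x. 1) = 1"
    "\<forall>f g. bounded (f ` carrier G) \<and> g \<in> carrier G \<longrightarrow> m (\<lambda>x. f (g \<otimes>\<^bsub>G\<^esub> x)) = m f"
    unfolding amenable_def by blast
  have "invariant_mean G m"
    by unfold_locales (use m in blast)+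
  then show thesis by (rule that)
qed

context invariant_mean
begin

lemma bounded_const_family: "bounded ((\<lambda>x. c :: 'a::real_normed_vector) ` carrier G)"
  by (rule boundedI[of _ "norm c"]) auto

lemma mean_const: "m (\<lambda>x. c) = c"
  using mean_scale[OF bounded_const_family, of c 1] mean_one by simp

lemma carrier_nonempty: "carrier G \<noteq> {}"
proof
  assume "carrier G = {}"
  then have "m (\<lambda>x. 1) = m (\<lambda>x. 0)" by (intro mean_cong) simp
  then show False using mean_one mean_const[of 0] by simp
qed

lemma mean_diff:
  assumes "bounded (f ` carrier G)" "bounded (f' ` carrier G)"
  shows "m (\<lambda>x. f x - f' x) = m f - m f'"
  using mean_add[OF assms(1) bounded_scaleR_comp[OF assms(2), of "-1"]]
    mean_scale[OF assms(2), of "-1"] by simp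

lemma mean_mono:
  assumes "bounded (f ` carrier G)" "bounded (f' ` carrier G)"
    and "\<And>x. x \<in> carrier G \<Longrightarrow> f x \<le> f' x"
  shows "m f \<le> m f'"
  using mean_nonneg[OF bounded_minus_comp[OF assms(2,1)]] assms(3) mean_diff[OF assms(2,1)]
  by simp

lemma mean_abs_le:
  assumes "\<And>x. x \<in> carrier G \<Longrightarrow> \<bar>f x\<bar> \<le> B"
  shows "\<bar>m f\<bar> \<le> B"
proof -
  have f: "bounded (f ` carrier G)" by (rule boundedI[of _ B]) (use assms in auto)
  have "m f \<le> m (\<lambda>x. B)" and "m (\<lambda>x. - B) \<le> m f"
    using assms abs_le_iff by (intro mean_mono f bounded_const_family; fastforce)+
  then show ?thesis by (simp add: mean_const)
qed

end

lemma bounded_blinfun_family: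
  "bounded (w ` S) \<Longrightarrow> bounded ((\<lambda>k. blinfun_apply T (w k)) ` S)"
  using bounded_linear_image[OF _ blinfun.bounded_linear_right, of "w ` S" T]
  by (simp add: image_image)

locale bidual_averaging = invariant_mean G m
  for G :: "('g, 'b) monoid_scheme" and m +
  fixes P :: "(('x::real_normed_vector \<Rightarrow>\<^sub>L real) \<Rightarrow>\<^sub>L real) \<Rightarrow>\<^sub>L 'x"
  assumes P_bidual_emb: "P (bidual_emb x) = x"
begin

definition mean_functional :: "('g \<Rightarrow> 'x) \<Rightarrow> ('x \<Rightarrow>\<^sub>L real) \<Rightarrow> real" where
  "mean_functional w f = m (\<lambda>k. f (w k))"

definition avg :: "('g \<Rightarrow> 'x) \<Rightarrow> 'x" where
  "avg w = P (Blinfun (mean_functional w))"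

lemma mean_functional_abs_le:
  assumes "\<And>k. k \<in> carrier G \<Longrightarrow> norm (w k) \<le> B"
  shows "\<bar>mean_functional w f\<bar> \<le> norm f * B"
  unfolding mean_functional_def
proof (rule mean_abs_le)
  fix k assume "k \<in> carrier G"
  have "\<bar>f (w k)\<bar> \<le> norm f * norm (w k)" using norm_blinfun[of f "w k"] by simp
  also have "\<dots> \<le> norm f * B" using assms \<open>k \<in> carrier G\<close> by (simp add: mult_left_mono)
  finally show "\<bar>f (w k)\<bar> \<le> norm f * B" .
qed

lemma mean_functional_lincomb:
  assumes "bounded (w ` carrier G)" "bounded (w' ` carrier G)"
  shows "mean_functional (\<lambda>k. a *\<^sub>R w k + b *\<^sub>R w' k) f =
    a * mean_functional w f + b * mean_functional w' f"
  using mean_add[OF bounded_scaleR_comp bounded_scaleR_comp, OF bounded_blinfun_family bounded_blinfun_family,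
      OF assms, of a f b]
    mean_scale[OF bounded_blinfun_family[OF assms(1)]] mean_scale[OF bounded_blinfun_family[OF assms(2)]]
  by (simp add: mean_functional_def blinfun.add_right blinfun.scaleR_right)

lemma bounded_linear_mean_functional:
  assumes "bounded (w ` carrier G)"
  shows "bounded_linear (mean_functional w)"
proof -
  obtain B where B: "\<And>k. k \<in> carrier G \<Longrightarrow> norm (w k) \<le> B"
    using assms by (auto simp: bounded_iff)
  show ?thesis
  proof (rule bounded_linear_intro[where K = B])
    show "mean_functional w (f + f') = mean_functional w f + mean_functional w f'" for f f'
      unfolding mean_functional_def
      using mean_add[OF bounded_blinfun_family bounded_blinfun_family, OF assms assms]
      by (simp add: blinfun.add_left)
    show "mean_functional w (r *\<^sub>R f) = r *\<^sub>R mean_functional w f" for r f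
      unfolding mean_functional_def using mean_scale[OF bounded_blinfun_family, OF assms]
      by (simp add: blinfun.scaleR_left)
    show "norm (mean_functional w f) \<le> norm f * B" for f
      using mean_functional_abs_le[OF B] by simp
  qed
qed

lemma avg_norm_le:
  assumes "\<And>k. k \<in> carrier G \<Longrightarrow> norm (w k) \<le> B"
  shows "norm (avg w) \<le> norm P * B"
proof -
  have "0 \<le> B" using assms carrier_nonempty by (meson all_not_in_conv norm_ge_zero order_trans)
  have "bounded (w ` carrier G)" by (rule boundedI[of _ B]) (use assms in auto)
  then have "norm (Blinfun (mean_functional w)) \<le> B"
    using mean_functional_abs_le[OF assms] \<open>0 \<le> B\<close>
    by (intro norm_blinfun_bound) (simp_all add: bounded_linear_Blinfun_apply
        bounded_linear_mean_functional mult.commute)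
  then show ?thesis
    unfolding avg_def by (meson mult_left_mono norm_blinfun norm_ge_zero order_trans)
qed

lemma avg_cong: "(\<And>k. k \<in> carrier G \<Longrightarrow> w k = w' k) \<Longrightarrow> avg w = avg w'"
  unfolding avg_def mean_functional_def by (metis (no_types, lifting) mean_cong)

lemma avg_const: "avg (\<lambda>k. x) = x"
proof -
  have "mean_functional (\<lambda>k. x) = bidual_emb x"
    by (simp add: fun_eq_iff mean_functional_def mean_const bidual_emb_apply)
  then show ?thesis by (simp add: avg_def blinfun_apply_inverse P_bidual_emb)
qed

lemma avg_lincomb:
  assumes "bounded (w ` carrier G)" "bounded (w' ` carrier G)"
  shows "avg (\<lambda>k. a *\<^sub>R w k + b *\<^sub>R w' k) = a *\<^sub>R avg w + b *\<^sub>R avg w'"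
proof -
  have "bounded ((\<lambda>k. a *\<^sub>R w k + b *\<^sub>R w' k) ` carrier G)"
    using assms by (intro bounded_plus_comp bounded_scaleR_comp)
  then have "Blinfun (mean_functional (\<lambda>k. a *\<^sub>R w k + b *\<^sub>R w' k)) =
      a *\<^sub>R Blinfun (mean_functional w) + b *\<^sub>R Blinfun (mean_functional w')"
    using assms by (intro blinfun_eqI) (simp add: bounded_linear_Blinfun_apply
        bounded_linear_mean_functional mean_functional_lincomb blinfun.add_left blinfun.scaleR_left)
  then show ?thesis by (simp add: avg_def blinfun.add_right blinfun.scaleR_right)
qed

lemma avg_diff:
  assumes "bounded (w ` carrier G)" "bounded (w' ` carrier G)"
  shows "avg (\<lambda>k. w k - w' k) = avg w - avg w'"
  using avg_lincomb[OF assms, of 1 "-1"] by simp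

lemma avg_left_translate:
  assumes "bounded (w ` carrier G)" "h \<in> carrier G"
  shows "avg (\<lambda>k. w (h \<otimes>\<^bsub>G\<^esub> k)) = avg w"
  unfolding avg_def mean_functional_def
  using mean_left_translate[OF bounded_blinfun_family[OF assms(1)] assms(2)] by simp

lemma avg_commute:
  assumes "bounded (w ` carrier G)" and "P o\<^sub>L adj (adj T) = T o\<^sub>L P"
  shows "T (avg w) = avg (\<lambda>k. T (w k))"
proof -
  have adj_mean: "adj (adj T) (Blinfun (mean_functional w)) = Blinfun (mean_functional (\<lambda>k. T (w k)))"
    using assms(1) bounded_blinfun_family[OF assms(1), of T]
    by (intro blinfun_eqI) (simp add: adj_apply bounded_linear_Blinfun_apply
        bounded_linear_mean_functional mean_functional_def)
  have "T (avg w) = (P o\<^sub>L adj (adj T)) (Blinfun (mean_functional w))"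
    by (simp add: avg_def assms(2))
  also have "\<dots> = avg (\<lambda>k. T (w k))"
    by (simp add: avg_def adj_mean)
  finally show ?thesis .
qed

end

section \<open>The defect of an operator on the twisted sum\<close>

lemma tw_iso_boundsD:
  assumes "tw_iso_bounds \<iota> \<Omega> Y00 T a b"
  shows "0 \<le> a" and "0 \<le> b"
    and "p \<in> tw_dom \<iota> \<Omega> Y00 \<Longrightarrow> T p \<in> tw_dom \<iota> \<Omega> Y00"
    and "p \<in> tw_dom \<iota> \<Omega> Y00 \<Longrightarrow> tw_qnorm \<iota> \<Omega> (T p) \<le> a * tw_qnorm \<iota> \<Omega> p"
    and "p \<in> tw_dom \<iota> \<Omega> Y00 \<Longrightarrow> tw_qnorm \<iota> \<Omega> p \<le> b * tw_qnorm \<iota> \<Omega> (T p)"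
  using assms by (simp_all add: tw_iso_bounds_def Let_def)

lemma tw_iso_bounds_defect:
  assumes "linear \<iota>" "inj \<iota>" "y \<in> Y00"
    and T: "tw_iso_bounds \<iota> \<Omega> Y00 (tw_op ug vg Lg) a b"
  obtains x where "ug (\<Omega> y) - \<Omega> (vg y) + Lg y = \<iota> x" and "norm x \<le> a * norm y"
proof -
  let ?T = "tw_op ug vg Lg"
  have p: "(\<Omega> y, y) \<in> tw_dom \<iota> \<Omega> Y00"
    using assms(1,3) linear_0 by (force simp: tw_dom_def)
  then have "?T (\<Omega> y, y) \<in> tw_dom \<iota> \<Omega> Y00"
    by (rule tw_iso_boundsD(3)[OF T])
  then obtain x where "ug (\<Omega> y) + Lg y - \<Omega> (vg y) = \<iota> x"
    by (auto simp: tw_dom_def tw_op_def)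
  then have x: "ug (\<Omega> y) - \<Omega> (vg y) + Lg y = \<iota> x"
    by (simp add: algebra_simps)
  have "tw_qnorm \<iota> \<Omega> (?T (\<Omega> y, y)) \<le> a * tw_qnorm \<iota> \<Omega> (\<Omega> y, y)"
    by (rule tw_iso_boundsD(4)[OF T p])
  moreover have "nX \<iota> 0 = 0"
    using nX_apply[OF assms(2), of 0] linear_0[OF assms(1)] by simp
  ultimately have "norm x + norm (vg y) \<le> a * norm y"
    using x assms(2) by (simp add: tw_qnorm_def tw_op_def nX_apply algebra_simps)
  then have "norm x \<le> a * norm y"
    using norm_ge_zero[of "vg y"] by linarith
  with x show thesis by (rule that)
qed

lemma tw_iso_bounds_lower:
  assumes "inj \<iota>" "0 \<in> Y00" "\<Omega> 0 = 0" "Lg 0 = 0" "vg 0 = 0"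
    and "ug (\<iota> x) = \<iota> (U x)"
    and T: "tw_iso_bounds \<iota> \<Omega> Y00 (tw_op ug vg Lg) a b"
  shows "norm x \<le> b * norm (U x)"
proof -
  have "(\<iota> x, 0) \<in> tw_dom \<iota> \<Omega> Y00"
    using assms(2,3) by (simp add: tw_dom_def)
  then have "tw_qnorm \<iota> \<Omega> (\<iota> x, 0) \<le> b * tw_qnorm \<iota> \<Omega> (tw_op ug vg Lg (\<iota> x, 0))"
    by (rule tw_iso_boundsD(5)[OF T])
  then show ?thesis
    using assms(1,3-6) by (simp add: tw_qnorm_def tw_op_def nX_apply)
qed

lemma tw_iso_bounds_defect_uniform:
  fixes U :: "'x::real_normed_vector \<Rightarrow>\<^sub>L 'x"
  assumes "linear \<iota>" "inj \<iota>" "0 \<in> Y00" "\<Omega> 0 = 0" "Lg 0 = 0" "vg 0 = 0"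
    and "\<And>x. ug (\<iota> x) = \<iota> (U x)"
    and T: "tw_iso_bounds \<iota> \<Omega> Y00 (tw_op ug vg Lg) a b"
    and "a * b \<le> K" "norm U \<le> Cu" "y \<in> Y00"
  obtains x where "ug (\<Omega> y) - \<Omega> (vg y) + Lg y = \<iota> x" and "norm x \<le> K * Cu * norm y"
proof -
  obtain x where x: "ug (\<Omega> y) - \<Omega> (vg y) + Lg y = \<iota> x" and xa: "norm x \<le> a * norm y"
    using tw_iso_bounds_defect[OF assms(1,2,11) T] .
  have ab: "0 \<le> a" "0 \<le> b" using tw_iso_boundsD(1,2)[OF T] by auto
  have "0 \<le> K" using assms(9) mult_nonneg_nonneg[OF ab] by linarith
  then have Kab: "a * b * norm U \<le> K * Cu"
    using assms(9,10) by (intro mult_mono) auto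
  have "norm x \<le> K * Cu * norm y"
  proof (cases "x = 0")
    case True
    have "0 \<le> a * b * norm U" using ab by simp
    then have "0 \<le> K * Cu" using Kab by linarith
    with True show ?thesis by simp
  next
    case False
    \<comment> \<open>the lower bound applied to \<open>x\<close> itself forces \<open>1 \<le> b * \<parallel>U\<parallel>\<close>\<close>
    have "norm x \<le> b * norm (U x)"
      by (rule tw_iso_bounds_lower[OF assms(2-6,7) T])
    also have "\<dots> \<le> b * norm U * norm x"
      using ab norm_blinfun[of U x] by (simp add: mult_left_mono mult.assoc)
    finally have "1 \<le> b * norm U" using False by simp
    then have "a \<le> a * b * norm U"
      using ab mult_left_mono[of 1 "b * norm U" a] by (simp add: mult.assoc)
    then have "a * norm y \<le> K * Cu * norm y"
      using Kab by (simp add: mult_right_mono)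
    then show ?thesis using xa by simp
  qed
  with x show thesis by (rule that)
qed

lemma twisted_defect_bounded:
  fixes u :: "'g \<Rightarrow> ('x::real_normed_vector \<Rightarrow>\<^sub>L 'x)"
    and v :: "'g \<Rightarrow> ('y::real_normed_vector \<Rightarrow>\<^sub>L 'y)"
    and \<iota> :: "'x \<Rightarrow> 'z::real_vector"
  assumes "linear \<iota>" "inj \<iota>" "extends_action G \<iota> u uinf" "subspace Y00" "quasi_linear \<iota> Y00 \<Omega>"
    and L: "\<forall>g\<in>carrier G. linear_on Y00 (L g)"
    and Cu: "\<forall>g\<in>carrier G. norm (u g) \<le> Cu"
    and K: "\<forall>g\<in>carrier G. \<exists>a b. a * b \<le> K \<and> tw_iso_bounds \<iota> \<Omega> Y00 (tw_op (uinf g) (v g) (L g)) a b"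
  obtains M where "\<And>g y. g \<in> carrier G \<Longrightarrow> y \<in> Y00 \<Longrightarrow> uinf g (\<Omega> y) - \<Omega> (v g y) + L g y = \<iota> (M g y)"
    and "\<And>g y. g \<in> carrier G \<Longrightarrow> y \<in> Y00 \<Longrightarrow> norm (M g y) \<le> max 0 (K * Cu) * norm y"
proof -
  have Y0: "0 \<in> Y00" using \<open>subspace Y00\<close> by (rule subspace_0)
  have "\<Omega> 0 = 0" using \<open>quasi_linear \<iota> Y00 \<Omega>\<close> Y0 by (rule quasi_linear_zero)
  define M where "M g y = inv_into UNIV \<iota> (uinf g (\<Omega> y) - \<Omega> (v g y) + L g y)" for g y
  have "uinf g (\<Omega> y) - \<Omega> (v g y) + L g y = \<iota> (M g y) \<and> norm (M g y) \<le> max 0 (K * Cu) * norm y"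
    if g: "g \<in> carrier G" and y: "y \<in> Y00" for g y
  proof -
    obtain a b where "a * b \<le> K" and T: "tw_iso_bounds \<iota> \<Omega> Y00 (tw_op (uinf g) (v g) (L g)) a b"
      using K g by blast
    have "\<And>x. uinf g (\<iota> x) = \<iota> (u g x)" using assms(3) g by (simp add: extends_action_def)
    moreover have "L g 0 = 0" using L g Y0 linear_on_zero by blast
    ultimately obtain x where x: "uinf g (\<Omega> y) - \<Omega> (v g y) + L g y = \<iota> x"
      and "norm x \<le> K * Cu * norm y"
      using tw_iso_bounds_defect_uniform[OF \<open>linear \<iota>\<close> \<open>inj \<iota>\<close> Y0 \<open>\<Omega> 0 = 0\<close> _ blinfun.zero_right _ T
          \<open>a * b \<le> K\<close>] Cu g y by blast
    moreover have "K * Cu * norm y \<le> max 0 (K * Cu) * norm y"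
      by (simp add: mult_right_mono)
    moreover have "M g y = x"
      using x \<open>inj \<iota>\<close> by (simp add: M_def)
    ultimately show ?thesis by simp
  qed
  then show thesis using that by blast
qed

section \<open>Averaging the defect\<close>

locale twisted_averaging = bidual_averaging G m P
  for G :: "('g, 'b) monoid_scheme" and m and P :: "(('x::banach \<Rightarrow>\<^sub>L real) \<Rightarrow>\<^sub>L real) \<Rightarrow>\<^sub>L 'x" +
  fixes u :: "'g \<Rightarrow> ('x \<Rightarrow>\<^sub>L 'x)" and v :: "'g \<Rightarrow> ('y::banach \<Rightarrow>\<^sub>L 'y)"
    and \<iota> :: "'x \<Rightarrow> 'z::real_vector" and uinf :: "'g \<Rightarrow> 'z \<Rightarrow> 'z"
    and Y00 :: "'y set" and \<Omega> :: "'y \<Rightarrow> 'z" and L :: "'g \<Rightarrow> 'y \<Rightarrow> 'z"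
    and M :: "'g \<Rightarrow> 'y \<Rightarrow> 'x" and Cu Cv A :: real
  assumes G_space_v: "G_space G v"
    and u_norm: "g \<in> carrier G \<Longrightarrow> norm (u g) \<le> Cu"
    and v_norm: "g \<in> carrier G \<Longrightarrow> norm (v g) \<le> Cv"
    and P_commute: "g \<in> carrier G \<Longrightarrow> P o\<^sub>L adj (adj (u g)) = u g o\<^sub>L P"
    and linear_\<iota>: "linear \<iota>" and inj_\<iota>: "inj \<iota>"
    and extends: "extends_action G \<iota> u uinf"
    and subspace_Y00: "subspace Y00"
    and v_Y00: "g \<in> carrier G \<Longrightarrow> y \<in> Y00 \<Longrightarrow> v g y \<in> Y00"
    and L_linear: "g \<in> carrier G \<Longrightarrow> linear_on Y00 (L g)"
    and defect_eq: "g \<in> carrier G \<Longrightarrow> y \<in> Y00 \<Longrightarrow> uinf g (\<Omega> y) - \<Omega> (v g y) + L g y = \<iota> (M g y)"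
    and defect_norm: "g \<in> carrier G \<Longrightarrow> y \<in> Y00 \<Longrightarrow> norm (M g y) \<le> A * norm y"
    and A_nonneg: "0 \<le> A"
begin

sublocale group G
  using G_space_v by (simp add: G_space_def)

lemma v_mult: "g \<in> carrier G \<Longrightarrow> h \<in> carrier G \<Longrightarrow> v (g \<otimes>\<^bsub>G\<^esub> h) y = v g (v h y)"
  using G_space_v by (simp add: G_space_def)

lemma v_inv_cancel: "g \<in> carrier G \<Longrightarrow> v (inv\<^bsub>G\<^esub> g) (v g y) = y"
  and v_cancel_inv: "g \<in> carrier G \<Longrightarrow> v g (v (inv\<^bsub>G\<^esub> g) y) = y"
  using G_space_v by (simp_all add: G_space_def flip: v_mult)

lemma uinf_linear: "g \<in> carrier G \<Longrightarrow> linear (uinf g)"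
  and uinf_\<iota>: "g \<in> carrier G \<Longrightarrow> uinf g (\<iota> x) = \<iota> (u g x)"
  and uinf_mult: "g \<in> carrier G \<Longrightarrow> h \<in> carrier G \<Longrightarrow> uinf (g \<otimes>\<^bsub>G\<^esub> h) z = uinf g (uinf h z)"
  using extends by (simp_all add: extends_action_def)

lemma Cu_nonneg: "0 \<le> Cu"
  using u_norm[OF one_closed] norm_ge_zero[of "u \<one>\<^bsub>G\<^esub>"] by linarith

lemma Cv_nonneg: "0 \<le> Cv"
  using v_norm[OF one_closed] norm_ge_zero[of "v \<one>\<^bsub>G\<^esub>"] by linarith

lemma u_norm_apply: "g \<in> carrier G \<Longrightarrow> norm (u g x) \<le> Cu * norm x"
  by (meson mult_right_mono norm_blinfun norm_ge_zero order_trans u_norm)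

lemma v_norm_apply: "g \<in> carrier G \<Longrightarrow> norm (v g y) \<le> Cv * norm y"
  by (meson mult_right_mono norm_blinfun norm_ge_zero order_trans v_norm)

lemma defect_norm_v:
  assumes "g \<in> carrier G" "k \<in> carrier G" "y \<in> Y00"
  shows "norm (M g (v k y)) \<le> A * Cv * norm y"
proof -
  have "norm (M g (v k y)) \<le> A * norm (v k y)" using assms by (simp add: defect_norm v_Y00)
  also have "\<dots> \<le> A * (Cv * norm y)" using assms(2) by (simp add: A_nonneg mult_left_mono v_norm_apply)
  finally show ?thesis by (simp add: mult.assoc)
qed

lemma bounded_defect_family:
  assumes "y \<in> Y00"
  shows "bounded ((\<lambda>k. M k (v (inv\<^bsub>G\<^esub> k) y)) ` carrier G)"
    and "h \<in> carrier G \<Longrightarrow> bounded ((\<lambda>k. M (h \<otimes>\<^bsub>G\<^esub> k) (v (inv\<^bsub>G\<^esub> k) y)) ` carrier G)"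
  using assms by (auto intro!: boundedI[of _ "A * Cv * norm y"] defect_norm_v)

definition averaged_defect :: "'y \<Rightarrow> 'x" where
  "averaged_defect y = avg (\<lambda>k. M k (v (inv\<^bsub>G\<^esub> k) y))"

definition averaged_twist :: "'y \<Rightarrow> 'z" where
  "averaged_twist y = \<Omega> y + \<iota> (averaged_defect y)"

definition coboundary_derivation :: "'g \<Rightarrow> 'y \<Rightarrow> 'z" where
  "coboundary_derivation g y = averaged_twist (v g y) - uinf g (averaged_twist y)"

definition correction :: "'g \<Rightarrow> 'y \<Rightarrow> 'x" where
  "correction g y = averaged_defect (v g y) - u g (averaged_defect y) - M g y"

definition defect_coboundary :: "'g \<Rightarrow> 'g \<Rightarrow> 'y \<Rightarrow> 'x" where
  "defect_coboundary g k z = M (g \<otimes>\<^bsub>G\<^esub> k) z - u g (M k z) - M g (v k z)"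

lemma averaged_defect_norm:
  assumes "y \<in> Y00"
  shows "norm (averaged_defect y) \<le> norm P * A * Cv * norm y"
proof -
  have "norm (averaged_defect y) \<le> norm P * (A * Cv * norm y)"
    unfolding averaged_defect_def
    by (rule avg_norm_le) (simp add: assms defect_norm_v inv_closed)
  then show ?thesis by (simp add: mult.assoc)
qed

lemma coboundary_derivation_defect:
  assumes "g \<in> carrier G"
  shows "uinf g (\<Omega> y) - \<Omega> (v g y) + coboundary_derivation g y =
    \<iota> (averaged_defect (v g y) - u g (averaged_defect y))"
  by (simp add: coboundary_derivation_def averaged_twist_def linear_add[OF uinf_linear[OF assms]]
      linear_diff[OF linear_\<iota>] uinf_\<iota>[OF assms])

lemma coboundary_derivation_eq:
  assumes "g \<in> carrier G" "y \<in> Y00"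
  shows "coboundary_derivation g y = L g y + \<iota> (correction g y)"
proof -
  have "coboundary_derivation g y =
      \<iota> (averaged_defect (v g y) - u g (averaged_defect y)) - (uinf g (\<Omega> y) - \<Omega> (v g y))"
    using coboundary_derivation_defect[OF assms(1), of y] by (simp add: algebra_simps)
  also have "\<dots> = L g y + \<iota> (correction g y)"
    by (simp add: correction_def linear_diff[OF linear_\<iota>] defect_eq[OF assms, symmetric])
  finally show ?thesis .
qed

lemma \<iota>_defect_coboundary:
  assumes g: "g \<in> carrier G" and k: "k \<in> carrier G" and z: "z \<in> Y00"
  shows "\<iota> (defect_coboundary g k z) = L (g \<otimes>\<^bsub>G\<^esub> k) z - uinf g (L k z) - L g (v k z)"
proof -
  have gk: "g \<otimes>\<^bsub>G\<^esub> k \<in> carrier G" using g k by simp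
  have "\<iota> (defect_coboundary g k z) = \<iota> (M (g \<otimes>\<^bsub>G\<^esub> k) z) - uinf g (\<iota> (M k z)) - \<iota> (M g (v k z))"
    by (simp add: defect_coboundary_def linear_diff[OF linear_\<iota>] uinf_\<iota>[OF g])
  also have "\<dots> = (uinf (g \<otimes>\<^bsub>G\<^esub> k) (\<Omega> z) - \<Omega> (v (g \<otimes>\<^bsub>G\<^esub> k) z) + L (g \<otimes>\<^bsub>G\<^esub> k) z)
      - uinf g (uinf k (\<Omega> z) - \<Omega> (v k z) + L k z)
      - (uinf g (\<Omega> (v k z)) - \<Omega> (v g (v k z)) + L g (v k z))"
    by (simp only: defect_eq[symmetric] gk g k z v_Y00)
  also have "\<dots> = L (g \<otimes>\<^bsub>G\<^esub> k) z - uinf g (L k z) - L g (v k z)"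
    by (simp add: linear_add[OF uinf_linear[OF g]] linear_diff[OF uinf_linear[OF g]]
        uinf_mult[OF g k] v_mult[OF g k])
  finally show ?thesis .
qed


lemma linear_on_defect_coboundary:
  assumes g: "g \<in> carrier G" and k: "k \<in> carrier G"
  shows "linear_on Y00 (defect_coboundary g k)"
  unfolding linear_on_def
proof (intro ballI allI)
  fix y y' a b assume y: "y \<in> Y00" and y': "y' \<in> Y00"
  have "a *\<^sub>R y + b *\<^sub>R y' \<in> Y00"
    using subspace_Y00 y y' by (simp add: subspace_add subspace_scale)
  moreover have "v k (a *\<^sub>R y + b *\<^sub>R y') = a *\<^sub>R v k y + b *\<^sub>R v k y'"
    by (simp add: blinfun.add_right blinfun.scaleR_right)
  ultimately have "\<iota> (defect_coboundary g k (a *\<^sub>R y + b *\<^sub>R y')) =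
      \<iota> (a *\<^sub>R defect_coboundary g k y + b *\<^sub>R defect_coboundary g k y')"
    using g k y y' linear_onD[OF L_linear] v_Y00
    by (simp add: \<iota>_defect_coboundary linear_add[OF linear_\<iota>] linear_scale[OF linear_\<iota>]
        linear_add[OF uinf_linear] linear_scale[OF uinf_linear] algebra_simps)
  then show "defect_coboundary g k (a *\<^sub>R y + b *\<^sub>R y') =
      a *\<^sub>R defect_coboundary g k y + b *\<^sub>R defect_coboundary g k y'"
    using inj_\<iota> by (simp add: inj_eq)
qed


lemma defect_coboundary_v_inv:
  "k \<in> carrier G \<Longrightarrow> defect_coboundary g k (v (inv\<^bsub>G\<^esub> k) y) =
    M (g \<otimes>\<^bsub>G\<^esub> k) (v (inv\<^bsub>G\<^esub> k) y) - u g (M k (v (inv\<^bsub>G\<^esub> k) y)) - M g y"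
  by (simp add: defect_coboundary_def v_cancel_inv)

lemma bounded_defect_coboundary_family:
  assumes "g \<in> carrier G" "y \<in> Y00"
  shows "bounded ((\<lambda>k. defect_coboundary g k (v (inv\<^bsub>G\<^esub> k) y)) ` carrier G)"
proof -
  have "bounded ((\<lambda>k. M (g \<otimes>\<^bsub>G\<^esub> k) (v (inv\<^bsub>G\<^esub> k) y) - u g (M k (v (inv\<^bsub>G\<^esub> k) y)) - M g y)
      ` carrier G)"
    using assms by (intro bounded_minus_comp bounded_blinfun_family bounded_defect_family
        bounded_const_family)
  then show ?thesis by (simp add: defect_coboundary_v_inv cong: image_cong)
qed

lemma avg_translated_defect:
  assumes g: "g \<in> carrier G" and y: "y \<in> Y00"
  shows "avg (\<lambda>k. M (g \<otimes>\<^bsub>G\<^esub> k) (v (inv\<^bsub>G\<^esub> k) y)) = averaged_defect (v g y)"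
proof -
  have "averaged_defect (v g y) =
      avg (\<lambda>k. M (g \<otimes>\<^bsub>G\<^esub> k) (v (inv\<^bsub>G\<^esub> (g \<otimes>\<^bsub>G\<^esub> k)) (v g y)))"
    unfolding averaged_defect_def
    by (rule avg_left_translate[symmetric]) (use g y v_Y00 bounded_defect_family in auto)
  also have "\<dots> = avg (\<lambda>k. M (g \<otimes>\<^bsub>G\<^esub> k) (v (inv\<^bsub>G\<^esub> k) y))"
    by (rule avg_cong) (simp add: g inv_mult_group v_mult v_inv_cancel)
  finally show ?thesis by simp
qed

lemma correction_eq_avg:
  assumes g: "g \<in> carrier G" and y: "y \<in> Y00"
  shows "correction g y = avg (\<lambda>k. defect_coboundary g k (v (inv\<^bsub>G\<^esub> k) y))"
proof -
  let ?w = "\<lambda>k. M k (v (inv\<^bsub>G\<^esub> k) y)"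
  have "avg (\<lambda>k. defect_coboundary g k (v (inv\<^bsub>G\<^esub> k) y)) =
      avg (\<lambda>k. M (g \<otimes>\<^bsub>G\<^esub> k) (v (inv\<^bsub>G\<^esub> k) y) - u g (?w k) - M g y)"
    by (rule avg_cong) (rule defect_coboundary_v_inv)
  also have "\<dots> = avg (\<lambda>k. M (g \<otimes>\<^bsub>G\<^esub> k) (v (inv\<^bsub>G\<^esub> k) y)) - avg (\<lambda>k. u g (?w k))
      - avg (\<lambda>k. M g y)"
    using g y by (simp add: avg_diff bounded_minus_comp bounded_blinfun_family bounded_defect_family
        bounded_const_family)
  also have "\<dots> = correction g y"
    using g y by (simp add: avg_translated_defect avg_const correction_def averaged_defect_def
        avg_commute[OF bounded_defect_family(1) P_commute])
  finally show ?thesis by simp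
qed

lemma linear_on_correction:
  assumes g: "g \<in> carrier G"
  shows "linear_on Y00 (correction g)"
  unfolding linear_on_def
proof (intro ballI allI)
  fix y y' a b assume y: "y \<in> Y00" and y': "y' \<in> Y00"
  let ?e = "\<lambda>y k. defect_coboundary g k (v (inv\<^bsub>G\<^esub> k) y)"
  have "a *\<^sub>R y + b *\<^sub>R y' \<in> Y00"
    using subspace_Y00 y y' by (simp add: subspace_add subspace_scale)
  then have "correction g (a *\<^sub>R y + b *\<^sub>R y') = avg (?e (a *\<^sub>R y + b *\<^sub>R y'))"
    by (rule correction_eq_avg[OF g])
  also have "\<dots> = avg (\<lambda>k. a *\<^sub>R ?e y k + b *\<^sub>R ?e y' k)"
    using g y y' v_Y00 linear_onD[OF linear_on_defect_coboundary]
    by (intro avg_cong) (simp add: blinfun.add_right blinfun.scaleR_right)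
  also have "\<dots> = a *\<^sub>R correction g y + b *\<^sub>R correction g y'"
    using g y y' by (simp add: avg_lincomb bounded_defect_coboundary_family correction_eq_avg)
  finally show "correction g (a *\<^sub>R y + b *\<^sub>R y') = a *\<^sub>R correction g y + b *\<^sub>R correction g y'" .
qed


lemma derivation_coboundary_derivation: "derivation G Y00 uinf v coboundary_derivation"
  unfolding derivation_def
proof (intro conjI ballI)
  fix g assume g: "g \<in> carrier G"
  show "linear_on Y00 (coboundary_derivation g)"
    unfolding linear_on_def
  proof (intro ballI allI)
    fix y y' a b assume y: "y \<in> Y00" and y': "y' \<in> Y00"
    have "a *\<^sub>R y + b *\<^sub>R y' \<in> Y00"
      using subspace_Y00 y y' by (simp add: subspace_add subspace_scale)
    then show "coboundary_derivation g (a *\<^sub>R y + b *\<^sub>R y') =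
        a *\<^sub>R coboundary_derivation g y + b *\<^sub>R coboundary_derivation g y'"
      using g y y' linear_onD[OF L_linear] linear_onD[OF linear_on_correction]
      by (simp add: coboundary_derivation_eq linear_add[OF linear_\<iota>] linear_scale[OF linear_\<iota>]
          algebra_simps)
  qed
next
  fix g h y assume g: "g \<in> carrier G" and h: "h \<in> carrier G" and "y \<in> Y00"
  show "coboundary_derivation (g \<otimes>\<^bsub>G\<^esub> h) y =
      uinf g (coboundary_derivation h y) + coboundary_derivation g (v h y)"
    by (simp add: coboundary_derivation_def g h uinf_mult v_mult linear_diff[OF uinf_linear])
qed

lemma averaged_defect_coboundary_norm:
  assumes g: "g \<in> carrier G" and y: "y \<in> Y00"
  shows "norm (averaged_defect (v g y) - u g (averaged_defect y)) \<le>
    norm P * A * Cv * (Cv + Cu) * norm y"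
proof -
  have PACv: "0 \<le> norm P * A * Cv" using A_nonneg Cv_nonneg by simp
  have "norm (averaged_defect (v g y)) \<le> norm P * A * Cv * norm (v g y)"
    using g y by (simp add: averaged_defect_norm v_Y00)
  also have "\<dots> \<le> norm P * A * Cv * (Cv * norm y)"
    using g PACv by (simp add: mult_left_mono v_norm_apply)
  finally have translated: "norm (averaged_defect (v g y)) \<le> norm P * A * Cv * Cv * norm y"
    by (simp add: mult.assoc)
  have "norm (u g (averaged_defect y)) \<le> Cu * norm (averaged_defect y)"
    using g by (rule u_norm_apply)
  also have "\<dots> \<le> Cu * (norm P * A * Cv * norm y)"
    using y Cu_nonneg by (simp add: averaged_defect_norm mult_left_mono)
  finally have commuted: "norm (u g (averaged_defect y)) \<le> norm P * A * Cv * Cu * norm y"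
    by (simp add: algebra_simps)
  show ?thesis
    using norm_triangle_ineq4[of "averaged_defect (v g y)" "u g (averaged_defect y)"] translated commuted
    by (simp add: algebra_simps)
qed

lemma compatible_coboundary_derivation:
  "compatible_via G \<iota> Y00 uinf v \<Omega> coboundary_derivation"
  unfolding compatible_via_def
proof (intro conjI derivation_coboundary_derivation exI ballI)
  fix g y assume g: "g \<in> carrier G" and y: "y \<in> Y00"
  show "uinf g (\<Omega> y) - \<Omega> (v g y) + coboundary_derivation g y \<in> range \<iota>"
    by (simp add: coboundary_derivation_defect g)
  show "nX \<iota> (uinf g (\<Omega> y) - \<Omega> (v g y) + coboundary_derivation g y) \<le>
      norm P * A * Cv * (Cv + Cu) * norm y"
    using averaged_defect_coboundary_norm[OF g y]
    by (simp add: coboundary_derivation_defect g nX_apply inj_\<iota>)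
qed

lemma correction_norm:
  assumes "g \<in> carrier G" "y \<in> Y00"
  shows "norm (correction g y) \<le> (norm P * A * Cv * (Cv + Cu) + A) * norm y"
  using averaged_defect_coboundary_norm[OF assms] defect_norm[OF assms]
    norm_triangle_ineq4[of "averaged_defect (v g y) - u g (averaged_defect y)" "M g y"]
  by (simp add: correction_def algebra_simps)

lemma exists_compatible_derivation:
  "\<exists>d. compatible_via G \<iota> Y00 uinf v \<Omega> d \<and>
     (\<exists>C'. \<forall>g\<in>carrier G. \<forall>y\<in>Y00.
        d g y - L g y \<in> range \<iota> \<and> (norm y \<le> 1 \<longrightarrow> nX \<iota> (d g y - L g y) \<le> C'))"
proof -
  let ?C = "norm P * A * Cv * (Cv + Cu) + A"
  have "0 \<le> ?C" using A_nonneg Cu_nonneg Cv_nonneg by simp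
  have "coboundary_derivation g y - L g y \<in> range \<iota> \<and>
      (norm y \<le> 1 \<longrightarrow> nX \<iota> (coboundary_derivation g y - L g y) \<le> ?C)"
    if g: "g \<in> carrier G" and y: "y \<in> Y00" for g y
  proof (intro conjI impI)
    show "coboundary_derivation g y - L g y \<in> range \<iota>"
      by (simp add: coboundary_derivation_eq g y)
    assume "norm y \<le> 1"
    then have "?C * norm y \<le> ?C" using \<open>0 \<le> ?C\<close> mult_left_mono[of "norm y" 1 ?C] by simp
    moreover have "nX \<iota> (coboundary_derivation g y - L g y) = norm (correction g y)"
      by (simp add: coboundary_derivation_eq g y nX_apply inj_\<iota>)
    ultimately show "nX \<iota> (coboundary_derivation g y - L g y) \<le> ?C"
      using correction_norm[OF g y] by linarith
  qed
  then show ?thesis using compatible_coboundary_derivation by blast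
qed

end

theorem mainTheorem14:
  fixes G :: "('g, 'b) monoid_scheme"
    and u :: "'g \<Rightarrow> ('x::banach \<Rightarrow>\<^sub>L 'x)"
    and v :: "'g \<Rightarrow> ('y::banach \<Rightarrow>\<^sub>L 'y)"
    and \<iota> :: "'x \<Rightarrow> 'z::real_vector"
    and uinf :: "'g \<Rightarrow> 'z \<Rightarrow> 'z"
    and Y00 :: "'y set"
    and \<Omega> :: "'y \<Rightarrow> 'z"
    and L :: "'g \<Rightarrow> 'y \<Rightarrow> 'z"
  assumes "group G" and "amenable G"
    and "G_space G u" and "G_space G v"
    and "G_complemented_in_bidual G u"
    and "linear \<iota>" and "inj \<iota>"
    and "extends_action G \<iota> u uinf"
    and "subspace Y00" and "closure Y00 = UNIV"
    and "\<forall>g\<in>carrier G. v g ` Y00 \<subseteq> Y00"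
    and "quasi_linear \<iota> Y00 \<Omega>"
    and "\<forall>g\<in>carrier G. linear_on Y00 (L g)"
    and "\<exists>K. \<forall>g\<in>carrier G. \<exists>a b. a * b \<le> K \<and>
           tw_iso_bounds \<iota> \<Omega> Y00 (tw_op (uinf g) (blinfun_apply (v g)) (L g)) a b"
  shows "\<exists>d. compatible_via G \<iota> Y00 uinf v \<Omega> d \<and>
           (\<exists>C'. \<forall>g\<in>carrier G. \<forall>y\<in>Y00.
              d g y - L g y \<in> range \<iota> \<and>
              (norm y \<le> 1 \<longrightarrow> nX \<iota> (d g y - L g y) \<le> C'))"
proof -
  obtain m where "invariant_mean G m"
    using \<open>amenable G\<close> by (rule amenable_imp_invariant_mean)
  obtain P :: "(('x \<Rightarrow>\<^sub>L real) \<Rightarrow>\<^sub>L real) \<Rightarrow>\<^sub>L 'x" where P_emb: "\<And>x. P (bidual_emb x) = x"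
    and P_commute: "\<forall>g\<in>carrier G. P o\<^sub>L adj (adj (u g)) = u g o\<^sub>L P"
    using \<open>G_complemented_in_bidual G u\<close> unfolding G_complemented_in_bidual_def by blast
  obtain Cu where Cu: "\<forall>g\<in>carrier G. norm (u g) \<le> Cu"
    using \<open>G_space G u\<close> unfolding G_space_def by blast
  obtain Cv where Cv: "\<forall>g\<in>carrier G. norm (v g) \<le> Cv"
    using \<open>G_space G v\<close> unfolding G_space_def by blast
  obtain K where "\<forall>g\<in>carrier G. \<exists>a b. a * b \<le> K \<and>
      tw_iso_bounds \<iota> \<Omega> Y00 (tw_op (uinf g) (v g) (L g)) a b"
    using assms(14) by blast
  then obtain M where "\<And>g y. g \<in> carrier G \<Longrightarrow> y \<in> Y00 \<Longrightarrow> uinf g (\<Omega> y) - \<Omega> (v g y) + L g y = \<iota> (M g y)"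
    and "\<And>g y. g \<in> carrier G \<Longrightarrow> y \<in> Y00 \<Longrightarrow> norm (M g y) \<le> max 0 (K * Cu) * norm y"
    using twisted_defect_bounded[OF assms(6-9,12,13) Cu] by blast
  moreover have "bidual_averaging G m P"
    by (intro bidual_averaging.intro bidual_averaging_axioms.intro \<open>invariant_mean G m\<close> P_emb)
  ultimately interpret twisted_averaging G m P u v \<iota> uinf Y00 \<Omega> L M Cu Cv "max 0 (K * Cu)"
    by (intro twisted_averaging.intro twisted_averaging_axioms.intro)
      (use assms(4-9,11,13) Cu Cv P_commute in \<open>simp_all add: image_subset_iff\<close>)
  show ?thesis by (rule exists_compatible_derivation)
qed

end
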